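(* Let $\beta\in\mathbb{F}_{p^m}\setminus\{0\}$ and let $\mathcal{C}=\left\langle\left(x^2+\gamma x+\frac{\gamma^2}{2}\right)^i\left(x^2-\gamma x+\frac{\gamma^2}{2}\right)^j\right\rangle$ be an ideal of $R[x]/\langle x^{4p^s}-(\alpha+\beta u)\rangle$ with $0\le i,j\le 2p^s$. Then $|\mathcal{C}|=p^{m(8p^s-2i-2j)}$.
   Context: Let $p$ be an odd prime and $m,s$ positive integers with $p^m\equiv 3\pmod 4$; $\mathbb{F}_{p^m}$ is the field with $p^m$ elements and $R=\mathbb{F}_{p^m}[u]/\langle u^2\rangle$. Fix $\alpha\in\mathbb{F}_{p^m}\setminus\{0\}$ that is not a square in $\mathbb{F}_{p^m}$, let $\alpha_0\in\mathbb{F}_{p^m}$ satisfy $\alpha_0^{p^s}=\alpha$, and let $\gamma\in\mathbb{F}_{p^m}$ satisfy $\gamma^4+4\alpha_0=0$. *)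

theory Defs
  imports "HOL-Algebra.Algebra"
begin

text \<open>The ring R = F[u]/(u^2) = F + uF, with an element a + b u represented as the pair (a, b).\<close>
definition dual_mult :: "'a::field \<times> 'a \<Rightarrow> 'a \<times> 'a \<Rightarrow> 'a \<times> 'a" where
  "dual_mult x y = (fst x * fst y, fst x * snd y + snd x * fst y)"

definition dual_add :: "'a::field \<times> 'a \<Rightarrow> 'a \<times> 'a \<Rightarrow> 'a \<times> 'a" where
  "dual_add x y = (fst x + fst y, snd x + snd y)"

definition dual_ring :: "('a::field \<times> 'a) ring" where
  "dual_ring = \<lparr>carrier = UNIV, monoid.mult = dual_mult, monoid.one = (1, 0),
      ring.zero = (0, 0), ring.add = dual_add\<rparr>"

abbreviation Rx :: "('a::field \<times> 'a, nat \<Rightarrow> 'a \<times> 'a) up_ring" where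
  "Rx \<equiv> UP dual_ring"

definition binom_poly :: "nat \<Rightarrow> 'a::field \<times> 'a \<Rightarrow> nat \<Rightarrow> 'a \<times> 'a" where
  "binom_poly n lam = monom Rx \<one>\<^bsub>dual_ring\<^esub> n \<ominus>\<^bsub>Rx\<^esub> monom Rx lam 0"

definition quot_ring :: "nat \<Rightarrow> 'a::field \<times> 'a \<Rightarrow> _" where
  "quot_ring n lam = Rx Quot (PIdl\<^bsub>Rx\<^esub> (binom_poly n lam))"

definition cmonom :: "'a::field \<Rightarrow> nat \<Rightarrow> nat \<Rightarrow> 'a \<times> 'a" where
  "cmonom c k = monom Rx (c, 0) k"

definition quad_poly :: "'a::field \<Rightarrow> 'a \<Rightarrow> nat \<Rightarrow> 'a \<times> 'a" where
  "quad_poly c g = cmonom 1 2 \<oplus>\<^bsub>Rx\<^esub> cmonom c 1 \<oplus>\<^bsub>Rx\<^esub> cmonom (g^2 / 2) 0"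

end

theory Submission
  imports Defs "HOL-Computational_Algebra.Polynomial" "HOL-Computational_Algebra.Primes"
    "HOL-Number_Theory.Residues"
begin

text \<open>Write A = x^N - \<alpha> with N = 4 p^s. Modulo x^N - (\<alpha> + \<beta> u) we have \<beta> u = A, so
  u \<mapsto> A / \<beta> identifies the quotient ring with F[x] / (A^2). Since \<gamma>^4 = -4 \<alpha>0, the two
  quadratics f1, f2 multiply to x^4 - \<alpha>0, and by the Frobenius A = (f1 f2)^(p^s). Hence the
  generator w = f1^i f2^j divides A^2 with cofactor q of degree 8 p^s - 2i - 2j, and the ideal
  generated by w in F[x] / (A^2) is w F[x] / (A^2) \<cong> F[x] / (q), which has |F|^(deg q) elements.\<close>

lemma cring_dual_ring: "cring (dual_ring :: ('a::field \<times> 'a) ring)"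
  by (intro cringI abelian_groupI comm_monoidI)
     (auto simp: dual_ring_def dual_add_def dual_mult_def algebra_simps add_eq_0_iff)

lemma cring_Rx: "cring (Rx :: ('a::field \<times> 'a, _) up_ring)"
  using UP_cring.UP_cring[of dual_ring] cring_dual_ring by (simp add: UP_cring_def)

text \<open>The element a + u b of R[x], for a, b \<in> F[x].\<close>
definition dual_poly :: "'a::field poly \<Rightarrow> 'a poly \<Rightarrow> nat \<Rightarrow> 'a \<times> 'a" where
  "dual_poly a b = (\<lambda>n. (coeff a n, coeff b n))"

lemma carrier_Rx: "carrier (Rx :: ('a::field \<times> 'a, _) up_ring) = {f. \<exists>n. bound (0, 0) n f}"
  by (auto simp: UP_def up_def dual_ring_def)

lemma dual_poly_carrier: "dual_poly a b \<in> carrier Rx"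
proof -
  have "bound (0, 0) (max (degree a) (degree b)) (dual_poly a b)"
    by (auto simp: bound_def dual_poly_def coeff_eq_0)
  then show ?thesis
    unfolding carrier_Rx by blast
qed

lemma carrier_Rx_dual_poly:
  assumes "f \<in> carrier Rx"
  obtains a b where "f = dual_poly a b"
proof -
  from assms obtain n where n: "bound (0, 0) n f"
    unfolding carrier_Rx by blast
  have "coeff (Abs_poly (fst \<circ> f)) = fst \<circ> f" "coeff (Abs_poly (snd \<circ> f)) = snd \<circ> f"
    by (rule coeff_Abs_poly[of n], use n in \<open>auto simp: bound_def\<close>)+
  then have "f = dual_poly (Abs_poly (fst \<circ> f)) (Abs_poly (snd \<circ> f))"
    by (simp add: dual_poly_def fun_eq_iff)
  then show thesis
    by (rule that)
qed

lemma dual_poly_eq_iff: "dual_poly a b = dual_poly c d \<longleftrightarrow> a = c \<and> b = d"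
  by (auto simp: dual_poly_def fun_eq_iff poly_eq_iff)

lemma add_dual_poly: "dual_poly a b \<oplus>\<^bsub>Rx\<^esub> dual_poly c d = dual_poly (a + c) (b + d)"
  using dual_poly_carrier[of a b] dual_poly_carrier[of c d]
  by (auto simp: UP_def dual_poly_def dual_ring_def dual_add_def)

lemma finsum_dual_ring:
  fixes f :: "'b \<Rightarrow> 'a::field \<times> 'a"
  assumes "finite A"
  shows "finsum dual_ring f A = (\<Sum>i\<in>A. fst (f i), \<Sum>i\<in>A. snd (f i))"
  using assms
proof (induction A rule: finite_induct)
  interpret D: cring "dual_ring :: ('a \<times> 'a) ring"
    by (rule cring_dual_ring)
  case empty
  show ?case
    using D.finsum_empty[of f] by (simp add: dual_ring_def)
next
  interpret D: cring "dual_ring :: ('a \<times> 'a) ring"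
    by (rule cring_dual_ring)
  case (insert x F)
  have "finsum dual_ring f (insert x F) = f x \<oplus>\<^bsub>dual_ring\<^esub> finsum dual_ring f F"
    using insert by (intro D.finsum_insert) (auto simp: dual_ring_def)
  then show ?case
    using insert by (simp add: dual_ring_def dual_add_def)
qed

lemma mult_dual_poly: "dual_poly a b \<otimes>\<^bsub>Rx\<^esub> dual_poly c d = dual_poly (a * c) (a * d + b * c)"
  using dual_poly_carrier[of a b] dual_poly_carrier[of c d]
  by (auto simp: UP_def dual_poly_def finsum_dual_ring coeff_mult fun_eq_iff)
     (auto simp: dual_ring_def dual_mult_def sum.distrib)

lemma monom_dual_poly: "up_ring.monom Rx a n = dual_poly (Polynomial.monom (fst a) n) (Polynomial.monom (snd a) n)"
  by (auto simp: UP_def dual_poly_def dual_ring_def fun_eq_iff coeff_monom)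

lemma one_dual_poly: "\<one>\<^bsub>Rx\<^esub> = dual_poly 1 0"
  by (auto simp: UP_def dual_poly_def dual_ring_def fun_eq_iff coeff_1)

lemma zero_dual_poly: "\<zero>\<^bsub>Rx\<^esub> = dual_poly 0 0"
  by (auto simp: UP_def dual_poly_def dual_ring_def fun_eq_iff)

lemma pow_dual_poly: "dual_poly a 0 [^]\<^bsub>Rx\<^esub> (n::nat) = dual_poly (a ^ n) 0"
  by (induction n) (simp_all add: one_dual_poly mult_dual_poly mult.commute)

lemma minus_dual_poly: "dual_poly a b \<ominus>\<^bsub>Rx\<^esub> dual_poly c d = dual_poly (a - c) (b - d)"
proof -
  interpret Rx: cring Rx
    by (rule cring_Rx)
  have "\<ominus>\<^bsub>Rx\<^esub> dual_poly c d = dual_poly (- c) (- d)"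
    by (rule Rx.minus_equality) (simp_all add: add_dual_poly zero_dual_poly dual_poly_carrier)
  then show ?thesis
    by (simp add: a_minus_def add_dual_poly)
qed

lemma binom_poly_dual_poly:
  "binom_poly n (a, b) = dual_poly (Polynomial.monom 1 n - [:a:]) (- [:b:])"
proof -
  have "\<one>\<^bsub>dual_ring\<^esub> = ((1::'a), (0::'a))"
    by (simp add: dual_ring_def)
  then show ?thesis
    by (simp add: binom_poly_def monom_dual_poly minus_dual_poly monom_0)
qed

lemma quad_poly_dual_poly: "quad_poly c g = dual_poly [:g^2 / 2, c, 1:] 0"
proof -
  have "Polynomial.monom 1 2 + Polynomial.monom c 1 + Polynomial.monom (g^2 / 2) 0 = [:g^2 / 2, c, 1:]"
    by (auto simp: poly_eq_iff coeff_pCons coeff_monom numeral_2_eq_2 split: nat.split)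
  then show ?thesis
    by (simp add: quad_poly_def cmonom_def monom_dual_poly add_dual_poly)
qed

text \<open>The kernel of the identification R[x] / (A - b u) \<cong> F[x] / (A^2), f + u g \<mapsto> f + A g / b.\<close>
lemma dual_poly_in_PIdl_iff:
  fixes A f g :: "'a::field poly"
  assumes "b \<noteq> 0"
  shows "dual_poly f g \<in> PIdl\<^bsub>Rx\<^esub> (dual_poly A (- [:b:]))
           \<longleftrightarrow> A\<^sup>2 dvd f + smult (inverse b) (A * g)"
proof
  assume "dual_poly f g \<in> PIdl\<^bsub>Rx\<^esub> (dual_poly A (- [:b:]))"
  then obtain h where h: "h \<in> carrier Rx" and fg: "dual_poly f g = h \<otimes>\<^bsub>Rx\<^esub> dual_poly A (- [:b:])"
    unfolding cgenideal_def by blast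
  obtain h0 h1 where "h = dual_poly h0 h1"
    using h by (rule carrier_Rx_dual_poly)
  with fg have f: "f = h0 * A" and g: "g = h1 * A - smult b h0"
    by (simp_all add: mult_dual_poly dual_poly_eq_iff)
  have "f + smult (inverse b) (A * g) = A\<^sup>2 * smult (inverse b) h1"
    unfolding f g using assms by (simp add: algebra_simps smult_diff_right power2_eq_square)
  then show "A\<^sup>2 dvd f + smult (inverse b) (A * g)"
    by (metis dvd_triv_left)
next
  assume "A\<^sup>2 dvd f + smult (inverse b) (A * g)"
  then obtain k where k: "f + smult (inverse b) (A * g) = A\<^sup>2 * k"
    by (auto elim: dvdE)
  define h0 where "h0 = A * k - smult (inverse b) g"
  have "f = h0 * A" "g = smult b k * A - smult b h0"
    using k assms by (simp_all add: h0_def algebra_simps smult_diff_right power2_eq_square eq_diff_eq)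
  then have "dual_poly f g = dual_poly h0 (smult b k) \<otimes>\<^bsub>Rx\<^esub> dual_poly A (- [:b:])"
    by (simp add: mult_dual_poly dual_poly_eq_iff)
  then show "dual_poly f g \<in> PIdl\<^bsub>Rx\<^esub> (dual_poly A (- [:b:]))"
    unfolding cgenideal_def using dual_poly_carrier by blast
qed

lemma rcos_dual_poly_eq_iff:
  fixes A f g f' g' :: "'a::field poly"
  assumes "b \<noteq> 0"
  defines "I \<equiv> PIdl\<^bsub>Rx\<^esub> (dual_poly A (- [:b:]))"
  shows "I +>\<^bsub>Rx\<^esub> dual_poly f g = I +>\<^bsub>Rx\<^esub> dual_poly f' g'
           \<longleftrightarrow> A\<^sup>2 dvd (f - f') + smult (inverse b) (A * (g - g'))"
proof -
  interpret Rx: cring Rx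
    by (rule cring_Rx)
  have "ideal I Rx"
    unfolding I_def by (rule Rx.cgenideal_ideal[OF dual_poly_carrier])
  from Rx.quotient_eq_iff_same_a_r_cos[OF this dual_poly_carrier dual_poly_carrier]
  have "dual_poly (f - f') (g - g') \<in> I
          \<longleftrightarrow> I +>\<^bsub>Rx\<^esub> dual_poly f g = I +>\<^bsub>Rx\<^esub> dual_poly f' g'"
    by (simp only: minus_dual_poly)
  then show ?thesis
    unfolding I_def dual_poly_in_PIdl_iff[OF assms(1)] by blast
qed

lemma (in cring) genideal_rcos_quotient:
  assumes "ideal I R" and "a \<in> carrier R"
  shows "Idl\<^bsub>R Quot I\<^esub> {I +> a} = (\<lambda>h. I +> (h \<otimes> a)) ` carrier R"
proof -
  interpret I: ideal I R
    by (rule assms(1))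
  have hom: "(+>) I \<in> ring_hom R (R Quot I)"
    by (rule I.rcos_ring_hom)
  have "Idl\<^bsub>R Quot I\<^esub> {I +> a} = PIdl\<^bsub>R Quot I\<^esub> (I +> a)"
    using ring_hom_closed[OF hom assms(2)]
    by (rule cring.cgenideal_eq_genideal[OF I.quotient_is_cring[OF is_cring], symmetric])
  also have "\<dots> = (\<lambda>h. I +> (h \<otimes> a)) ` carrier R"
    using ring_hom_mult[OF hom _ assms(2)]
    by (auto simp: cgenideal_def FactRing_def A_RCOSETS_def')
  finally show ?thesis .
qed

definition polys_below :: "nat \<Rightarrow> 'a::zero poly set" where
  "polys_below K = {c. \<forall>n\<ge>K. coeff c n = 0}"

lemma card_polys_below: "card (polys_below K :: 'a::{finite,zero} poly set) = card (UNIV :: 'a set) ^ K"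
proof -
  have "bij_betw (\<lambda>c. map (coeff c) [0..<K]) (polys_below K :: 'a poly set) {xs. set xs \<subseteq> UNIV \<and> length xs = K}"
  proof (rule bij_betw_byWitness[where f' = Poly])
    show "\<forall>c\<in>polys_below K. Poly (map (coeff c) [0..<K]) = c"
      by (auto simp: polys_below_def poly_eq_iff nth_default_def not_le)
    show "\<forall>xs\<in>{xs. set xs \<subseteq> UNIV \<and> length xs = K}. map (coeff (Poly xs)) [0..<K] = xs"
      by (auto simp: nth_default_def intro: nth_equalityI)
    show "Poly ` {xs. set xs \<subseteq> UNIV \<and> length xs = K} \<subseteq> polys_below K"
      by (auto simp: polys_below_def nth_default_def)
  qed auto
  from bij_betw_same_card[OF this] show ?thesis
    using card_lists_length_eq[of "UNIV :: 'a set" K] by simp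
qed

lemma mod_in_polys_below:
  fixes a q :: "'a::field poly"
  assumes "q \<noteq> 0"
  shows "a mod q \<in> polys_below (degree q)"
  using degree_mod_less'[OF assms, of a]
  by (cases "a mod q = 0") (auto simp: polys_below_def intro!: coeff_eq_0 dest: less_le_trans)

lemma polys_below_dvd_imp_eq:
  fixes c c' q :: "'a::field poly"
  assumes "c \<in> polys_below (degree q)" and "c' \<in> polys_below (degree q)" and "q dvd c - c'"
  shows "c = c'"
proof (rule ccontr)
  assume "c \<noteq> c'"
  have "\<forall>n\<ge>degree q. coeff (c - c') n = 0"
    using assms(1,2) by (simp add: polys_below_def)
  then have "degree (c - c') < degree q"
    using \<open>c \<noteq> c'\<close> by (metis leading_coeff_0_iff not_less right_minus_eq)
  then show False
    using dvd_imp_degree_le[OF assms(3)] \<open>c \<noteq> c'\<close> by simp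
qed

lemma card_Idl_quotient_dual:
  fixes A w q :: "'a::{finite,field} poly"
  assumes wq: "w * q = A\<^sup>2" and "A \<noteq> 0" and "b \<noteq> 0"
  defines "I \<equiv> PIdl\<^bsub>Rx\<^esub> (dual_poly A (- [:b:]))"
  shows "card (Idl\<^bsub>Rx Quot I\<^esub> {I +>\<^bsub>Rx\<^esub> dual_poly w 0}) = card (UNIV :: 'a set) ^ degree q"
proof -
  interpret Rx: cring Rx
    by (rule cring_Rx)
  have I: "ideal I Rx"
    unfolding I_def by (rule Rx.cgenideal_ideal[OF dual_poly_carrier])
  have "w \<noteq> 0" and "q \<noteq> 0"
    using wq \<open>A \<noteq> 0\<close> by auto
  define cls where "cls c = I +>\<^bsub>Rx\<^esub> dual_poly (c * w) 0" for c
  have cls_eq_iff: "cls c = cls c' \<longleftrightarrow> q dvd c - c'" for c c'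
    unfolding cls_def I_def rcos_dual_poly_eq_iff[OF \<open>b \<noteq> 0\<close>]
    using \<open>w \<noteq> 0\<close> by (simp add: mult.commute[of w] flip: wq left_diff_distrib)
  have reduce: "I +>\<^bsub>Rx\<^esub> (dual_poly h0 h1 \<otimes>\<^bsub>Rx\<^esub> dual_poly w 0)
                  = cls ((h0 + smult (inverse b) (A * h1)) mod q)" for h0 h1
  proof -
    define e where "e = h0 + smult (inverse b) (A * h1)"
    have "h0 * w - e mod q * w + smult (inverse b) (A * (h1 * w)) = w * (e - e mod q)"
      by (simp add: e_def algebra_simps)
    also have "\<dots> = A\<^sup>2 * (e div q)"
      by (simp add: wq[symmetric] minus_mod_eq_mult_div algebra_simps)
    finally show ?thesis
      unfolding cls_def I_def mult_dual_poly rcos_dual_poly_eq_iff[OF \<open>b \<noteq> 0\<close>] e_def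
      by (simp only: mult_zero_right add_0 diff_zero) (metis dvd_triv_left)
  qed
  have "Idl\<^bsub>Rx Quot I\<^esub> {I +>\<^bsub>Rx\<^esub> dual_poly w 0}
          = (\<lambda>h. I +>\<^bsub>Rx\<^esub> (h \<otimes>\<^bsub>Rx\<^esub> dual_poly w 0)) ` carrier Rx"
    by (rule Rx.genideal_rcos_quotient[OF I dual_poly_carrier])
  also have "\<dots> = cls ` polys_below (degree q)"
  proof (rule subset_antisym)
    show "(\<lambda>h. I +>\<^bsub>Rx\<^esub> (h \<otimes>\<^bsub>Rx\<^esub> dual_poly w 0)) ` carrier Rx \<subseteq> cls ` polys_below (degree q)"
    proof (rule image_subsetI)
      fix h :: "nat \<Rightarrow> 'a \<times> 'a"
      assume "h \<in> carrier Rx"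
      then obtain h0 h1 where "h = dual_poly h0 h1"
        by (rule carrier_Rx_dual_poly)
      then show "I +>\<^bsub>Rx\<^esub> (h \<otimes>\<^bsub>Rx\<^esub> dual_poly w 0) \<in> cls ` polys_below (degree q)"
        using reduce mod_in_polys_below[OF \<open>q \<noteq> 0\<close>] by simp
    qed
    have "cls c = I +>\<^bsub>Rx\<^esub> (dual_poly c 0 \<otimes>\<^bsub>Rx\<^esub> dual_poly w 0)" for c
      by (simp add: cls_def mult_dual_poly)
    then show "cls ` polys_below (degree q) \<subseteq> (\<lambda>h. I +>\<^bsub>Rx\<^esub> (h \<otimes>\<^bsub>Rx\<^esub> dual_poly w 0)) ` carrier Rx"
      using dual_poly_carrier by blast
  qed
  finally have "Idl\<^bsub>Rx Quot I\<^esub> {I +>\<^bsub>Rx\<^esub> dual_poly w 0} = cls ` polys_below (degree q)" .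
  moreover have "inj_on cls (polys_below (degree q))"
    using polys_below_dvd_imp_eq by (auto simp: inj_on_def cls_eq_iff)
  ultimately show ?thesis
    by (simp add: card_image card_polys_below)
qed

lemma CHAR_eq_prime_if_card:
  assumes "Factorial_Ring.prime p" and "card (UNIV :: 'a::{finite,field} set) = p ^ m"
  shows "CHAR('a) = p"
proof -
  have "Factorial_Ring.prime CHAR('a)"
    by (rule prime_CHAR_semidom) (simp add: finite_imp_CHAR_pos)
  moreover have "CHAR('a) dvd p ^ m"
    using CHAR_dvd_CARD[where 'a = 'a] assms(2) by simp
  ultimately show ?thesis
    using assms(1) by (simp add: prime_dvd_power primes_dvd_imp_eq)
qed

lemma two_neq_zero_if_odd_CHAR:
  assumes "odd CHAR('a::field)"
  shows "(2::'a) \<noteq> 0"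
proof
  assume "(2::'a) = 0"
  then have "CHAR('a) dvd 2"
    using of_nat_eq_0_iff_char_dvd[of 2, where 'a = 'a] by simp
  with assms have "CHAR('a) = 1"
    by (metis dvd_refl even_even_mod_4_iff nat_dvd_1_iff_1 prime_nat_iff two_is_prime_nat)
  then show False
    using of_nat_eq_0_iff_char_dvd[of 1, where 'a = 'a] by simp
qed

lemma monom_minus_const_power_CHAR:
  fixes a :: "'a::field"
  assumes "Factorial_Ring.prime CHAR('a)" and "odd CHAR('a)"
  shows "(Polynomial.monom 1 k - [:a:]) ^ (CHAR('a) ^ s)
           = Polynomial.monom 1 (k * CHAR('a) ^ s) - [:a ^ (CHAR('a) ^ s):]"
proof -
  have "(Polynomial.monom 1 k + - [:a:]) ^ (CHAR('a) ^ s)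
          = Polynomial.monom 1 k ^ (CHAR('a) ^ s) + (- [:a:]) ^ (CHAR('a) ^ s)"
    by (rule freshmans_dream'[where n = s]) (simp_all add: assms(1))
  moreover have "Polynomial.monom (1::'a) k ^ (CHAR('a) ^ s) = Polynomial.monom 1 (k * CHAR('a) ^ s)"
    by (simp add: monom_power)
  moreover have "(- [:a:]) ^ (CHAR('a) ^ s) = - [:a ^ (CHAR('a) ^ s):]"
    using assms(2) by (simp add: poly_const_pow)
  ultimately show ?thesis
    by (simp only: diff_conv_add_uminus)
qed

lemma quadratic_factorization:
  fixes g a :: "'a::field"
  assumes "g ^ 4 + 4 * a = 0" and "(2::'a) \<noteq> 0"
  shows "[:g\<^sup>2 / 2, g, 1:] * [:g\<^sup>2 / 2, - g, 1:] = Polynomial.monom 1 4 - [:a:]"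
proof -
  have "(4::'a) \<noteq> 0"
    using assms(2) mult_eq_0_iff[of "2::'a" 2] by simp
  then have "g\<^sup>2 / 2 * (g\<^sup>2 / 2) = - a"
    using assms by (simp add: field_simps power4_eq_xxxx power2_eq_square eq_neg_iff_add_eq_0)
  moreover have "g\<^sup>2 / 2 + g\<^sup>2 / 2 = g * g"
    using assms(2) by (simp add: field_simps power2_eq_square)
  ultimately show ?thesis
    by (simp add: mult_pCons_left monom_altdef power4_eq_xxxx algebra_simps)
qed

lemma mult_powers_complement:
  fixes f g :: "'a::comm_semiring_1"
  assumes "i \<le> n" and "j \<le> n"
  shows "f ^ i * g ^ j * (f ^ (n - i) * g ^ (n - j)) = (f * g) ^ n"
proof -
  have "f ^ i * g ^ j * (f ^ (n - i) * g ^ (n - j)) = f ^ (i + (n - i)) * g ^ (j + (n - j))"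
    by (simp add: power_add algebra_simps)
  then show ?thesis
    using assms by (simp add: power_mult_distrib)
qed

theorem theorem3p6:
  fixes p m s :: nat and \<alpha> \<alpha>0 \<beta> \<gamma> :: "'a::{finite,field}" and i j :: nat
  assumes "Factorial_Ring.prime p" and "odd p" and "m > 0" and "s > 0"
    and "card (UNIV :: 'a set) = p ^ m"
    and "p ^ m mod 4 = 3"
    and "\<alpha> \<noteq> 0" and "\<not> (\<exists>y. y ^ 2 = \<alpha>)"
    and "\<alpha>0 ^ (p ^ s) = \<alpha>"
    and "\<gamma> ^ 4 + 4 * \<alpha>0 = 0"
    and "\<beta> \<noteq> 0"
    and "i \<le> 2 * p ^ s" and "j \<le> 2 * p ^ s"
  shows "card (Idl\<^bsub>quot_ring (4 * p ^ s) (\<alpha>, \<beta>)\<^esub>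
           {PIdl\<^bsub>Rx\<^esub> (binom_poly (4 * p ^ s) (\<alpha>, \<beta>)) +>\<^bsub>Rx\<^esub>
              ([^]\<^bsub>Rx\<^esub>) (quad_poly \<gamma> \<gamma>) i \<otimes>\<^bsub>Rx\<^esub> ([^]\<^bsub>Rx\<^esub>) (quad_poly (- \<gamma>) \<gamma>) j})
         = p ^ (m * (8 * p ^ s - 2 * i - 2 * j))"
proof -
  define f1 :: "'a poly" where "f1 = [:\<gamma>\<^sup>2 / 2, \<gamma>, 1:]"
  define f2 :: "'a poly" where "f2 = [:\<gamma>\<^sup>2 / 2, - \<gamma>, 1:]"
  define A where "A = Polynomial.monom 1 (4 * p ^ s) - [:\<alpha>:]"
  define q where "q = f1 ^ (2 * p ^ s - i) * f2 ^ (2 * p ^ s - j)"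
  have CHAR: "CHAR('a) = p"
    using assms(1,5) by (rule CHAR_eq_prime_if_card)
  have "(2::'a) \<noteq> 0"
    by (rule two_neq_zero_if_odd_CHAR) (simp add: CHAR assms(2))
  then have "f1 * f2 = Polynomial.monom 1 4 - [:\<alpha>0:]"
    unfolding f1_def f2_def by (rule quadratic_factorization[OF assms(10)])
  then have A_eq: "A = (f1 * f2) ^ p ^ s"
    using monom_minus_const_power_CHAR[of 4 \<alpha>0 s] by (simp add: A_def CHAR assms(1,2,9))
  have "f1 \<noteq> 0" "f2 \<noteq> 0"
    by (simp_all add: f1_def f2_def)
  then have "A \<noteq> 0"
    by (simp add: A_eq)
  have wq: "f1 ^ i * f2 ^ j * q = A\<^sup>2"
    using mult_powers_complement[OF assms(12,13)]
    by (simp add: q_def A_eq mult.commute[of 2] power_mult)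
  have "degree q = 8 * p ^ s - 2 * i - 2 * j"
    using \<open>f1 \<noteq> 0\<close> \<open>f2 \<noteq> 0\<close> assms(12,13)
    by (simp add: q_def degree_mult_eq degree_power_eq f1_def f2_def)
  with card_Idl_quotient_dual[OF wq \<open>A \<noteq> 0\<close> assms(11)] show ?thesis
    by (simp add: quot_ring_def binom_poly_dual_poly quad_poly_dual_poly pow_dual_poly mult_dual_poly
        A_def f1_def f2_def assms(5) power_mult)
qed

end
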